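(* Let $k_1,k_2,k_5$ be nonzero real constants and consider the equation $$u_t=k_5+\frac{1}{x}\bigl(k_1 x e^{k_2 u} u_x\bigr)_x$$ together with its Lie point symmetry $X=k_2 x\frac{\partial}{\partial x}+2\frac{\partial}{\partial u}$. The invariant solution of this equation corresponding to $X$ is $u(x,t)=\frac{1}{k_2}\ln\left(\frac{x^2}{p(t)}\right)$, where $p(t)$ satisfies the similarity reduction equation $$p'(t)+k_2k_5\,p(t)+4k_1=0,$$ whose solution is $p(t)=-\frac{4k_1}{k_2k_5}+c_1e^{-k_2k_5 t}$ with an arbitrary constant $c_1$.
   Context: A function $u=u(x,t)$ is an invariant solution of the equation corresponding to the infinitesimal symmetry $X=\xi\frac{\partial}{\partial x}+\tau\frac{\partial}{\partial t}+\eta\frac{\partial}{\partial u}$ if and only if (i) $u$ satisfies the equation and (ii) $u$ defines an invariant surface of $X$, i.e. $\xi\frac{\partial u}{\partial x}+\tau\frac{\partial u}{\partial t}-\eta=0$. Here $x>0$ is the cylindrical radial variable. *)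

theory Defs
  imports "HOL-Analysis.Analysis"
begin

definition ux :: "(real \<Rightarrow> real \<Rightarrow> real) \<Rightarrow> real \<Rightarrow> real \<Rightarrow> real" where
  "ux u x t = deriv (\<lambda>y. u y t) x"

definition ut :: "(real \<Rightarrow> real \<Rightarrow> real) \<Rightarrow> real \<Rightarrow> real \<Rightarrow> real" where
  "ut u x t = deriv (\<lambda>s. u x s) t"

definition solves_eq :: "real \<Rightarrow> real \<Rightarrow> real \<Rightarrow> real set \<Rightarrow> (real \<Rightarrow> real \<Rightarrow> real) \<Rightarrow> bool" where
  "solves_eq k1 k2 k5 I u \<longleftrightarrow>
     (\<forall>x>0. \<forall>t\<in>I.
        (\<lambda>y. u y t) differentiable (at x) \<and>
        (\<lambda>s. u x s) differentiable (at t) \<and>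
        (\<lambda>y. k1 * y * exp (k2 * u y t) * ux u y t) differentiable (at x) \<and>
        ut u x t = k5 + (1 / x) * deriv (\<lambda>y. k1 * y * exp (k2 * u y t) * ux u y t) x)"

text \<open>Invariant surface condition  xi u_x + tau u_t - eta = 0  for
  X = xi d/dx + tau d/dt + eta d/du (coefficients depending on x, t, u).\<close>
definition invariant_surface ::
  "(real \<Rightarrow> real \<Rightarrow> real \<Rightarrow> real) \<Rightarrow> (real \<Rightarrow> real \<Rightarrow> real \<Rightarrow> real) \<Rightarrow>
   (real \<Rightarrow> real \<Rightarrow> real \<Rightarrow> real) \<Rightarrow> real set \<Rightarrow> (real \<Rightarrow> real \<Rightarrow> real) \<Rightarrow> bool" where
  "invariant_surface \<xi> \<tau> \<eta> I u \<longleftrightarrow>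
     (\<forall>x>0. \<forall>t\<in>I. \<xi> x t (u x t) * ux u x t + \<tau> x t (u x t) * ut u x t - \<eta> x t (u x t) = 0)"

definition invariant_solution ::
  "real \<Rightarrow> real \<Rightarrow> real \<Rightarrow> (real \<Rightarrow> real \<Rightarrow> real \<Rightarrow> real) \<Rightarrow> (real \<Rightarrow> real \<Rightarrow> real \<Rightarrow> real) \<Rightarrow>
   (real \<Rightarrow> real \<Rightarrow> real \<Rightarrow> real) \<Rightarrow> real set \<Rightarrow> (real \<Rightarrow> real \<Rightarrow> real) \<Rightarrow> bool" where
  "invariant_solution k1 k2 k5 \<xi> \<tau> \<eta> I u \<longleftrightarrow>
     solves_eq k1 k2 k5 I u \<and> invariant_surface \<xi> \<tau> \<eta> I u"

definition reduction_ode :: "real \<Rightarrow> real \<Rightarrow> real \<Rightarrow> real set \<Rightarrow> (real \<Rightarrow> real) \<Rightarrow> bool" where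
  "reduction_ode k1 k2 k5 I p \<longleftrightarrow>
     (\<forall>t\<in>I. \<exists>p'. (p has_real_derivative p') (at t) \<and> p' + k2 * k5 * p t + 4 * k1 = 0)"

end

theory Submission
  imports Defs
begin

text \<open>The invariant-surface condition \<open>k2 x u\<^sub>x = 2\<close> integrates to
  \<open>u = u(1,t) + (2/k2) ln x\<close>, i.e. \<open>u = (1/k2) ln (x\<^sup>2 / p(t))\<close> with
  \<open>p = exp (- k2 u(1,t))\<close>. For such \<open>u\<close> the flux \<open>k1 x e\<^bsup>k2 u\<^esup> u\<^sub>x\<close> equals
  \<open>2 k1 x\<^sup>2 / (k2 p)\<close>, with \<open>x\<close>-derivative \<open>4 k1 x / (k2 p)\<close>, and \<open>u\<^sub>t = - p' / (k2 p)\<close>;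
  so the equation collapses to the linear ODE \<open>p' + k2 k5 p + 4 k1 = 0\<close>, solved with the
  integrating factor \<open>e\<^bsup>k2 k5 t\<^esup>\<close>.\<close>

lemma linear_ode_solution_iff:
  fixes a b :: real and p :: "real \<Rightarrow> real" and I :: "real set"
  assumes a: "a \<noteq> 0" and I: "open I" "is_interval I"
  shows "(\<forall>t\<in>I. \<exists>p'. (p has_real_derivative p') (at t) \<and> p' + a * p t + b = 0) \<longleftrightarrow>
         (\<exists>c. \<forall>t\<in>I. p t = - b / a + c * exp (- a * t))"
proof
  assume ode: "\<forall>t\<in>I. \<exists>p'. (p has_real_derivative p') (at t) \<and> p' + a * p t + b = 0"
  define g where "g t = (p t + b / a) * exp (a * t)" for t
  have "(g has_field_derivative 0) (at t within I)" if t: "t \<in> I" for t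
  proof -
    obtain p' where p': "(p has_real_derivative p') (at t)" "p' + a * p t + b = 0"
      using ode t by blast
    have "(g has_real_derivative (p' + a * p t + b) * exp (a * t)) (at t)"
      unfolding g_def using p'(1) a
      by (auto intro!: derivative_eq_intros simp: algebra_simps)
    then show ?thesis
      using p'(2) by (simp add: has_field_derivative_at_within)
  qed
  then obtain c where c: "\<And>t. t \<in> I \<Longrightarrow> g t = c"
    using has_field_derivative_zero_constant[OF is_interval_convex[OF I(2)]] by blast
  show "\<exists>c. \<forall>t\<in>I. p t = - b / a + c * exp (- a * t)"
  proof (intro exI ballI)
    fix t assume "t \<in> I"
    then have "p t + b / a = c * exp (- a * t)"
      using c[of t] unfolding g_def by (simp add: exp_minus field_simps)
    then show "p t = - b / a + c * exp (- a * t)" by simp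
  qed
next
  assume "\<exists>c. \<forall>t\<in>I. p t = - b / a + c * exp (- a * t)"
  then obtain c where c: "\<And>t. t \<in> I \<Longrightarrow> p t = - b / a + c * exp (- a * t)" by blast
  show "\<forall>t\<in>I. \<exists>p'. (p has_real_derivative p') (at t) \<and> p' + a * p t + b = 0"
  proof (intro ballI exI conjI)
    fix t assume t: "t \<in> I"
    have "((\<lambda>t. - b / a + c * exp (- a * t)) has_real_derivative - a * c * exp (- a * t)) (at t)"
      by (auto intro!: derivative_eq_intros)
    then show "(p has_real_derivative - a * c * exp (- a * t)) (at t)"
      by (rule has_field_derivative_transform_within_open[OF _ I(1) t]) (simp add: c)
    show "- a * c * exp (- a * t) + a * p t + b = 0"
      using a by (simp add: c[OF t] field_simps)
  qed
qed

lemma eq_ln_of_has_real_derivative: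
  fixes f :: "real \<Rightarrow> real"
  assumes f': "\<And>y. y > 0 \<Longrightarrow> (f has_real_derivative c / y) (at y)" and x: "x > 0"
  shows "f x = f 1 + c * ln x"
proof -
  have "((\<lambda>y. f y - c * ln y) has_field_derivative 0) (at y within {0<..})" if "y \<in> {0<..}" for y
    using that f'[of y] by (auto intro!: derivative_eq_intros simp: has_field_derivative_at_within)
  from has_field_derivative_zero_constant[OF convex_real_interval(3) this]
  obtain d where d: "\<forall>y\<in>{0<..}. f y - c * ln y = d" by blast
  have "f x - c * ln x = d" using d x by simp
  moreover have "f 1 = d" using d[rule_format, of 1] by simp
  ultimately show ?thesis by linarith
qed

lemma log_profile_has_real_derivative:
  fixes k2 P :: real and v :: "real \<Rightarrow> real"
  assumes k2: "k2 \<noteq> 0" and P: "P > 0" and v: "\<And>y. y > 0 \<Longrightarrow> v y = (1 / k2) * ln (y\<^sup>2 / P)"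
    and x: "x > 0"
  shows "(v has_real_derivative 2 / (k2 * x)) (at x)"
proof -
  have v_eq: "v y = (1 / k2) * (2 * ln y - ln P)" if "y > 0" for y
    using v[OF that] that P by (simp add: ln_div ln_realpow)
  have "((\<lambda>y. 2 * ln y - ln P) has_real_derivative 2 / x) (at x)"
    using x by (auto intro!: derivative_eq_intros)
  from DERIV_cmult[OF this, of "1 / k2"]
  have "((\<lambda>y. (1 / k2) * (2 * ln y - ln P)) has_real_derivative 2 / (k2 * x)) (at x)"
    by simp
  then show ?thesis
    by (rule has_field_derivative_transform_within_open[where S = "{0<..}"]) (simp_all add: x v_eq)
qed

lemma log_profile_flux_has_real_derivative:
  fixes k1 k2 P :: real and v :: "real \<Rightarrow> real"
  assumes k2: "k2 \<noteq> 0" and P: "P > 0" and v: "\<And>y. y > 0 \<Longrightarrow> v y = (1 / k2) * ln (y\<^sup>2 / P)"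
    and x: "x > 0"
  shows "((\<lambda>y. k1 * y * exp (k2 * v y) * deriv v y) has_real_derivative 4 * k1 * x / (k2 * P)) (at x)"
proof -
  have flux: "k1 * y * exp (k2 * v y) * deriv v y = 2 * k1 / (k2 * P) * y\<^sup>2" if y: "y > 0" for y
  proof -
    have exp_v: "exp (k2 * v y) = y\<^sup>2 / P" using v y k2 P by simp
    have v': "deriv v y = 2 / (k2 * y)"
      using log_profile_has_real_derivative[OF k2 P v y] by (rule DERIV_imp_deriv)
    show ?thesis unfolding exp_v v' using y k2 P by (simp add: field_simps power2_eq_square)
  qed
  have "((\<lambda>y. 2 * k1 / (k2 * P) * y\<^sup>2) has_real_derivative 4 * k1 * x / (k2 * P)) (at x)"
    using k2 P by (auto intro!: derivative_eq_intros simp: field_simps)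
  then show ?thesis
    by (rule has_field_derivative_transform_within_open[where S = "{0<..}"]) (use x flux in auto)
qed

lemma log_profile_time_has_real_derivative:
  fixes k2 x :: real and p :: "real \<Rightarrow> real" and I :: "real set"
  assumes k2: "k2 \<noteq> 0" and I: "open I" "t \<in> I" and p_pos: "\<And>s. s \<in> I \<Longrightarrow> p s > 0"
    and p': "(p has_real_derivative p') (at t)" and x: "x > 0"
    and w: "\<And>s. s \<in> I \<Longrightarrow> w s = (1 / k2) * ln (x\<^sup>2 / p s)"
  shows "(w has_real_derivative - p' / (k2 * p t)) (at t)"
proof -
  have "((\<lambda>s. (1 / k2) * (ln (x\<^sup>2) - ln (p s))) has_real_derivative (1 / k2) * (0 - p' / p t)) (at t)"
    using k2 p' p_pos[OF I(2)] by (auto intro!: derivative_eq_intros)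
  then have d: "((\<lambda>s. (1 / k2) * (ln (x\<^sup>2) - ln (p s))) has_real_derivative - p' / (k2 * p t)) (at t)"
    using k2 by simp
  have w_eq: "w s = (1 / k2) * (ln (x\<^sup>2) - ln (p s))" if "s \<in> I" for s
    using w[OF that] p_pos[OF that] x by (simp add: ln_div)
  show ?thesis
    by (rule has_field_derivative_transform_within_open[OF d I]) (simp add: w_eq)
qed

lemma invariant_surface_scaling_iff_has_real_derivative:
  fixes k2 :: real and I :: "real set" and u :: "real \<Rightarrow> real \<Rightarrow> real"
  assumes k2: "k2 \<noteq> 0"
    and diff: "\<And>x t. x > 0 \<Longrightarrow> t \<in> I \<Longrightarrow> (\<lambda>y. u y t) differentiable (at x)"
  shows "invariant_surface (\<lambda>x t v. k2 * x) (\<lambda>x t v. 0) (\<lambda>x t v. 2) I u \<longleftrightarrow>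
         (\<forall>x>0. \<forall>t\<in>I. ((\<lambda>y. u y t) has_real_derivative 2 / (k2 * x)) (at x))"
proof -
  have pointwise: "k2 * x * ux u x t + 0 * ut u x t - 2 = 0 \<longleftrightarrow>
        ((\<lambda>y. u y t) has_real_derivative 2 / (k2 * x)) (at x)" if x: "x > 0" and t: "t \<in> I" for x t
  proof -
    have u_x: "((\<lambda>y. u y t) has_real_derivative ux u x t) (at x)"
      unfolding ux_def using diff[OF x t] by (simp only: DERIV_deriv_iff_real_differentiable)
    have "k2 * x * ux u x t + 0 * ut u x t - 2 = 0 \<longleftrightarrow> ux u x t = 2 / (k2 * x)"
      using k2 x by (auto simp: field_simps)
    also have "\<dots> \<longleftrightarrow> ((\<lambda>y. u y t) has_real_derivative 2 / (k2 * x)) (at x)"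
      using u_x DERIV_unique[OF u_x, of "2 / (k2 * x)"] by auto
    finally show ?thesis .
  qed
  show ?thesis
    unfolding invariant_surface_def by (intro all_cong ball_cong refl) (rule pointwise)
qed

lemma has_real_derivative_scaling_iff_log_profile:
  fixes k2 :: real and I :: "real set" and u :: "real \<Rightarrow> real \<Rightarrow> real"
  assumes k2: "k2 \<noteq> 0"
  shows "(\<forall>x>0. \<forall>t\<in>I. ((\<lambda>y. u y t) has_real_derivative 2 / (k2 * x)) (at x)) \<longleftrightarrow>
         (\<exists>p. (\<forall>t\<in>I. p t > 0) \<and> (\<forall>x>0. \<forall>t\<in>I. u x t = (1 / k2) * ln (x\<^sup>2 / p t)))"
proof
  assume u': "\<forall>x>0. \<forall>t\<in>I. ((\<lambda>y. u y t) has_real_derivative 2 / (k2 * x)) (at x)"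
  have profile: "u x t = (1 / k2) * ln (x\<^sup>2 / exp (- k2 * u 1 t))" if x: "x > 0" and t: "t \<in> I" for x t
  proof -
    have "\<And>y. y > 0 \<Longrightarrow> ((\<lambda>y. u y t) has_real_derivative (2 / k2) / y) (at y)"
      using u' t by simp
    then have "u x t = u 1 t + 2 / k2 * ln x"
      by (rule eq_ln_of_has_real_derivative[where f = "\<lambda>y. u y t", OF _ x])
    moreover have "ln (x\<^sup>2 / exp (- k2 * u 1 t)) = 2 * ln x + k2 * u 1 t"
      using x by (simp add: ln_div ln_realpow)
    ultimately show ?thesis using k2 by (simp add: field_simps)
  qed
  show "\<exists>p. (\<forall>t\<in>I. p t > 0) \<and> (\<forall>x>0. \<forall>t\<in>I. u x t = (1 / k2) * ln (x\<^sup>2 / p t))"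
  proof (intro exI[of _ "\<lambda>t. exp (- k2 * u 1 t)"] conjI)
    show "\<forall>t\<in>I. exp (- k2 * u 1 t) > 0" by simp
    show "\<forall>x>0. \<forall>t\<in>I. u x t = (1 / k2) * ln (x\<^sup>2 / exp (- k2 * u 1 t))"
      by (intro allI impI ballI) (rule profile)
  qed
next
  assume "\<exists>p. (\<forall>t\<in>I. p t > 0) \<and> (\<forall>x>0. \<forall>t\<in>I. u x t = (1 / k2) * ln (x\<^sup>2 / p t))"
  then obtain p where p_pos: "\<forall>t\<in>I. p t > 0"
    and u: "\<forall>x>0. \<forall>t\<in>I. u x t = (1 / k2) * ln (x\<^sup>2 / p t)"
    by blast
  show "\<forall>x>0. \<forall>t\<in>I. ((\<lambda>y. u y t) has_real_derivative 2 / (k2 * x)) (at x)"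
  proof (intro allI impI ballI)
    fix x t :: real assume x: "x > 0" and t: "t \<in> I"
    have "\<And>y. y > 0 \<Longrightarrow> u y t = (1 / k2) * ln (y\<^sup>2 / p t)" using u t by blast
    then show "((\<lambda>y. u y t) has_real_derivative 2 / (k2 * x)) (at x)"
      by (rule log_profile_has_real_derivative[OF k2 p_pos[rule_format, OF t] _ x])
  qed
qed

lemma log_profile_equation_iff_ode_at:
  fixes k1 k2 k5 :: real and I :: "real set"
    and p :: "real \<Rightarrow> real" and u :: "real \<Rightarrow> real \<Rightarrow> real"
  assumes k2: "k2 \<noteq> 0" and I: "open I" and p_pos: "\<And>t. t \<in> I \<Longrightarrow> p t > 0"
    and u: "\<And>x t. x > 0 \<Longrightarrow> t \<in> I \<Longrightarrow> u x t = (1 / k2) * ln (x\<^sup>2 / p t)"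
    and x: "x > 0" and t: "t \<in> I"
  shows "(\<lambda>s. u x s) differentiable (at t) \<and>
           ut u x t = k5 + (1 / x) * deriv (\<lambda>y. k1 * y * exp (k2 * u y t) * ux u y t) x \<longleftrightarrow>
         (\<exists>p'. (p has_real_derivative p') (at t) \<and> p' + k2 * k5 * p t + 4 * k1 = 0)"
proof -
  have u_slice: "\<And>y. y > 0 \<Longrightarrow> u y t = (1 / k2) * ln (y\<^sup>2 / p t)" using u t by blast
  have "((\<lambda>y. k1 * y * exp (k2 * u y t) * ux u y t) has_real_derivative 4 * k1 * x / (k2 * p t)) (at x)"
    unfolding ux_def by (rule log_profile_flux_has_real_derivative[OF k2 p_pos[OF t] u_slice x])
  then have flux': "(1 / x) * deriv (\<lambda>y. k1 * y * exp (k2 * u y t) * ux u y t) x = 4 * k1 / (k2 * p t)"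
    using x by (simp add: DERIV_imp_deriv)
  have p_t: "p t > 0" using p_pos[OF t] .
  show ?thesis
  proof
    assume pde: "(\<lambda>s. u x s) differentiable (at t) \<and>
      ut u x t = k5 + (1 / x) * deriv (\<lambda>y. k1 * y * exp (k2 * u y t) * ux u y t) x"
    have u_t: "((\<lambda>s. u x s) has_real_derivative ut u x t) (at t)"
      using conjunct1[OF pde] unfolding ut_def by (simp only: DERIV_deriv_iff_real_differentiable)
    have eq: "ut u x t = k5 + 4 * k1 / (k2 * p t)"
      using conjunct2[OF pde] unfolding flux' .
    have p_eq: "p s = x\<^sup>2 * exp (- k2 * u x s)" if "s \<in> I" for s
      using u[OF x that] p_pos[OF that] x k2 by (simp add: ln_div exp_diff)
    have "((\<lambda>s. x\<^sup>2 * exp (- k2 * u x s)) has_real_derivative - k2 * p t * ut u x t) (at t)"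
      using u_t by (auto intro!: derivative_eq_intros simp: p_eq[OF t] algebra_simps)
    then have "(p has_real_derivative - k2 * p t * ut u x t) (at t)"
      by (rule has_field_derivative_transform_within_open[OF _ I t]) (simp_all add: p_eq t)
    moreover have "- k2 * p t * ut u x t + k2 * k5 * p t + 4 * k1 = 0"
      unfolding eq using k2 p_t by (simp add: field_simps)
    ultimately show "\<exists>p'. (p has_real_derivative p') (at t) \<and> p' + k2 * k5 * p t + 4 * k1 = 0"
      by blast
  next
    assume "\<exists>p'. (p has_real_derivative p') (at t) \<and> p' + k2 * k5 * p t + 4 * k1 = 0"
    then obtain p' where p': "(p has_real_derivative p') (at t)" "p' + k2 * k5 * p t + 4 * k1 = 0"
      by blast
    have "((\<lambda>s. u x s) has_real_derivative - p' / (k2 * p t)) (at t)"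
      by (rule log_profile_time_has_real_derivative[where w = "\<lambda>s. u x s", OF k2 I t p_pos p'(1) x u[OF x]])
    moreover have "- p' / (k2 * p t) = k5 + 4 * k1 / (k2 * p t)"
      using p'(2) k2 p_t by (simp add: field_simps)
    ultimately show "(\<lambda>s. u x s) differentiable (at t) \<and>
      ut u x t = k5 + (1 / x) * deriv (\<lambda>y. k1 * y * exp (k2 * u y t) * ux u y t) x"
      unfolding ut_def flux' by (auto simp: real_differentiable_def DERIV_imp_deriv)
  qed
qed

lemma solves_eq_log_profile_iff_reduction_ode:
  fixes k1 k2 k5 :: real and I :: "real set"
    and p :: "real \<Rightarrow> real" and u :: "real \<Rightarrow> real \<Rightarrow> real"
  assumes k2: "k2 \<noteq> 0" and I: "open I" and p_pos: "\<And>t. t \<in> I \<Longrightarrow> p t > 0"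
    and u: "\<And>x t. x > 0 \<Longrightarrow> t \<in> I \<Longrightarrow> u x t = (1 / k2) * ln (x\<^sup>2 / p t)"
  shows "solves_eq k1 k2 k5 I u \<longleftrightarrow> reduction_ode k1 k2 k5 I p"
proof -
  have diff: "(\<lambda>y. u y t) differentiable (at x) \<and>
        (\<lambda>y. k1 * y * exp (k2 * u y t) * ux u y t) differentiable (at x)" if "x > 0" "t \<in> I" for x t
  proof -
    have v: "\<And>y. y > 0 \<Longrightarrow> u y t = (1 / k2) * ln (y\<^sup>2 / p t)" using u that(2) by blast
    show ?thesis
      unfolding ux_def real_differentiable_def
      using log_profile_has_real_derivative[OF k2 p_pos[OF that(2)] v that(1)]
        log_profile_flux_has_real_derivative[OF k2 p_pos[OF that(2)] v that(1)] by blast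
  qed
  have pointwise: "(\<lambda>y. u y t) differentiable (at x) \<and> (\<lambda>s. u x s) differentiable (at t) \<and>
        (\<lambda>y. k1 * y * exp (k2 * u y t) * ux u y t) differentiable (at x) \<and>
        ut u x t = k5 + (1 / x) * deriv (\<lambda>y. k1 * y * exp (k2 * u y t) * ux u y t) x \<longleftrightarrow>
        (\<exists>p'. (p has_real_derivative p') (at t) \<and> p' + k2 * k5 * p t + 4 * k1 = 0)"
    if "x > 0" "t \<in> I" for x t
    using diff[OF that]
      log_profile_equation_iff_ode_at[where p = p and u = u and x = x and t = t, OF k2 I p_pos u that]
    by blast
  have "solves_eq k1 k2 k5 I u \<longleftrightarrow>
        (\<forall>x>(0::real). \<forall>t\<in>I.
           \<exists>p'. (p has_real_derivative p') (at t) \<and> p' + k2 * k5 * p t + 4 * k1 = 0)"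
    unfolding solves_eq_def by (intro all_cong ball_cong refl) (rule pointwise)
  also have "\<dots> \<longleftrightarrow> reduction_ode k1 k2 k5 I p"
    unfolding reduction_ode_def using zero_less_one by blast
  finally show ?thesis .
qed

theorem theorem4:
  fixes k1 k2 k5 :: real and I :: "real set" and u :: "real \<Rightarrow> real \<Rightarrow> real"
  assumes "k1 \<noteq> 0" and "k2 \<noteq> 0" and "k5 \<noteq> 0"
    and "open I" and "is_interval I" and "I \<noteq> {}"
  shows "(invariant_solution k1 k2 k5 (\<lambda>x t v. k2 * x) (\<lambda>x t v. 0) (\<lambda>x t v. 2) I u \<longleftrightarrow>
            (\<exists>p. (\<forall>t\<in>I. p t > 0) \<and> reduction_ode k1 k2 k5 I p \<and>
                 (\<forall>x>0. \<forall>t\<in>I. u x t = (1 / k2) * ln (x\<^sup>2 / p t))))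
       \<and> (\<forall>p. reduction_ode k1 k2 k5 I p \<longleftrightarrow>
            (\<exists>c1. \<forall>t\<in>I. p t = - (4 * k1) / (k2 * k5) + c1 * exp (- k2 * k5 * t)))"
proof (intro conjI allI)
  note k2 = \<open>k2 \<noteq> 0\<close> and I = \<open>open I\<close> \<open>is_interval I\<close>
  have profile_solves_iff: "solves_eq k1 k2 k5 I u \<longleftrightarrow> reduction_ode k1 k2 k5 I p"
    if "\<forall>t\<in>I. p t > 0" "\<forall>x>0. \<forall>t\<in>I. u x t = (1 / k2) * ln (x\<^sup>2 / p t)" for p
    using solves_eq_log_profile_iff_reduction_ode[OF k2 I(1) that[rule_format]] .
  have surface_iff: "invariant_surface (\<lambda>x t v. k2 * x) (\<lambda>x t v. 0) (\<lambda>x t v. 2) I u \<longleftrightarrow>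
      (\<exists>p. (\<forall>t\<in>I. p t > 0) \<and> (\<forall>x>0. \<forall>t\<in>I. u x t = (1 / k2) * ln (x\<^sup>2 / p t)))"
    if "solves_eq k1 k2 k5 I u"
  proof -
    have diff: "\<And>x t. x > 0 \<Longrightarrow> t \<in> I \<Longrightarrow> (\<lambda>y. u y t) differentiable (at x)"
      using that unfolding solves_eq_def by blast
    show ?thesis
      using invariant_surface_scaling_iff_has_real_derivative[OF k2 diff]
        has_real_derivative_scaling_iff_log_profile[OF k2] by (rule trans)
  qed
  show "invariant_solution k1 k2 k5 (\<lambda>x t v. k2 * x) (\<lambda>x t v. 0) (\<lambda>x t v. 2) I u \<longleftrightarrow>
        (\<exists>p. (\<forall>t\<in>I. p t > 0) \<and> reduction_ode k1 k2 k5 I p \<and>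
             (\<forall>x>0. \<forall>t\<in>I. u x t = (1 / k2) * ln (x\<^sup>2 / p t)))"
    unfolding invariant_solution_def using profile_solves_iff surface_iff by blast
  show "reduction_ode k1 k2 k5 I p \<longleftrightarrow>
        (\<exists>c1. \<forall>t\<in>I. p t = - (4 * k1) / (k2 * k5) + c1 * exp (- k2 * k5 * t))" for p
    using linear_ode_solution_iff[of "k2 * k5" I p "4 * k1"] \<open>k5 \<noteq> 0\<close> k2 I
    unfolding reduction_ode_def by simp
qed

end
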